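(* Let $G$ and $H$ be locally compact second countable groups that are coarsely equivalent. Then there are measurable coarse Lipschitz maps $f\colon G\to H$ and $g\colon H\to G$ such that $f\circ g$ and $g\circ f$ are close to the respective identity maps.
   Context: Metrics on $G$ and $H$ are left-invariant proper continuous metrics (these exist and any two are coarsely equivalent). A map $f\colon (X,d_X)\to(Y,d_Y)$ is coarse Lipschitz if there is a non-decreasing $a\colon[0,\infty)\to[0,\infty)$ with $\lim_{t\to\infty}a(t)=\infty$ and $d_Y(f(x),f(x'))\le a(d_X(x,x'))$ for all $x,x'$. Two maps $f,g\colon X\to Y$ are close if $\sup_{x\in X}d_Y(f(x),g(x))<\infty$. A coarse Lipschitz map $f$ is a coarse equivalence if there is a coarse Lipschitz map $g\colon Y\to X$ with $fg$ and $gf$ close to the identity; $G$ and $H$ are coarsely equivalent if such an $f\colon G\to H$ exists. *)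

theory Defs
  imports "HOL-Analysis.Analysis"
begin

text \<open>Locally compact second countable (Hausdorff) topological groups are modelled by
  types of class topological_group_add (group operation written additively, not assumed
  commutative), t2_space and second_countable_topology, together with local compactness.\<close>

definition lcsc_group :: "'a::{topological_group_add, t2_space, second_countable_topology} itself \<Rightarrow> bool" where
  "lcsc_group _ \<longleftrightarrow> locally_compact_space (euclidean :: 'a topology)"

definition lipc_metric :: "('a::topological_group_add \<Rightarrow> 'a \<Rightarrow> real) \<Rightarrow> bool" where
  "lipc_metric d \<longleftrightarrow>
     Metric_space UNIV d \<and>
     (\<forall>g x y. d (g + x) (g + y) = d x y) \<and>
     (\<forall>x r. compact (closure {y. d x y \<le> r})) \<and>
     continuous_on UNIV (\<lambda>p. d (fst p) (snd p))"

definition coarse_lipschitz :: "('a \<Rightarrow> 'a \<Rightarrow> real) \<Rightarrow> ('b \<Rightarrow> 'b \<Rightarrow> real) \<Rightarrow> ('a \<Rightarrow> 'b) \<Rightarrow> bool" where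
  "coarse_lipschitz dX dY f \<longleftrightarrow>
     (\<exists>a::real \<Rightarrow> real. mono_on {0..} a \<and> (\<forall>t\<ge>0. a t \<ge> 0) \<and> filterlim a at_top at_top \<and>
        (\<forall>x x'. dY (f x) (f x') \<le> a (dX x x')))"

definition close_maps :: "('b \<Rightarrow> 'b \<Rightarrow> real) \<Rightarrow> ('a \<Rightarrow> 'b) \<Rightarrow> ('a \<Rightarrow> 'b) \<Rightarrow> bool" where
  "close_maps dY f g \<longleftrightarrow> (\<exists>C. \<forall>x. dY (f x) (g x) \<le> C)"

definition coarse_equivalence :: "('a \<Rightarrow> 'a \<Rightarrow> real) \<Rightarrow> ('b \<Rightarrow> 'b \<Rightarrow> real) \<Rightarrow> ('a \<Rightarrow> 'b) \<Rightarrow> bool" where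
  "coarse_equivalence dX dY f \<longleftrightarrow> coarse_lipschitz dX dY f \<and>
     (\<exists>g. coarse_lipschitz dY dX g \<and> close_maps dY (f \<circ> g) id \<and> close_maps dX (g \<circ> f) id)"

end

theory Submission
  imports Defs
begin

text \<open>Pick a dense sequence \<open>x\<^sub>n\<close> in \<open>G\<close> and send \<open>x\<close> to \<open>f(x\<^sub>n)\<close> for the least \<open>n\<close> with
  \<open>d(x\<^sub>n, x) < 1\<close>. The resulting map is constant on the pieces of a countable Borel partition,
  hence measurable, and it stays within bounded distance of \<open>f\<close> because \<open>f\<close> is coarse Lipschitz.
  Closeness of maps is transitive and is preserved by composition with coarse Lipschitz maps,
  so replacing both halves of a coarse equivalence by such measurable approximations again gives
  a coarse equivalence.\<close>

lemma close_maps_trans: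
  assumes "Metric_space UNIV d" and "close_maps d f g" and "close_maps d g h"
  shows "close_maps d f h"
proof -
  interpret Metric_space UNIV d by (rule assms(1))
  obtain C1 C2 where "\<And>x. d (f x) (g x) \<le> C1" and "\<And>x. d (g x) (h x) \<le> C2"
    using assms(2,3) unfolding close_maps_def by blast
  then have "d (f x) (h x) \<le> C1 + C2" for x
    using triangle[of "f x" "g x" "h x"] by (smt (verit) UNIV_I)
  then show ?thesis unfolding close_maps_def by blast
qed

lemma close_maps_sym:
  assumes "Metric_space UNIV d" and "close_maps d f g"
  shows "close_maps d g f"
  using assms Metric_space.commute unfolding close_maps_def by fastforce

lemma close_maps_compose_right:
  assumes "close_maps d f f'"
  shows "close_maps d (f \<circ> g) (f' \<circ> g)"
  using assms unfolding close_maps_def by auto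

lemma close_maps_compose_left:
  assumes "Metric_space UNIV dX" and "coarse_lipschitz dX dY f" and "close_maps dX g g'"
  shows "close_maps dY (f \<circ> g) (f \<circ> g')"
proof -
  interpret Metric_space UNIV dX by (rule assms(1))
  obtain a where a: "mono_on {0..} a" "\<And>x x'. dY (f x) (f x') \<le> a (dX x x')"
    using assms(2) unfolding coarse_lipschitz_def by blast
  obtain C where C: "\<And>x. dX (g x) (g' x) \<le> C"
    using assms(3) unfolding close_maps_def by blast
  have "dY (f (g x)) (f (g' x)) \<le> a C" for x
  proof -
    have "dX (g x) (g' x) \<ge> 0" by simp
    then have "a (dX (g x) (g' x)) \<le> a C"
      using C[of x] by (intro mono_onD[OF a(1)]) (auto intro: order_trans[OF nonneg])
    then show ?thesis using a(2) order_trans by blast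
  qed
  then show ?thesis unfolding close_maps_def by auto
qed

lemma coarse_lipschitz_close:
  assumes "Metric_space UNIV dY" and "coarse_lipschitz dX dY f" and "close_maps dY f h"
  shows "coarse_lipschitz dX dY h"
proof -
  interpret Metric_space UNIV dY by (rule assms(1))
  obtain a where a: "mono_on {0..} a" "\<And>t. t \<ge> 0 \<Longrightarrow> a t \<ge> 0" "filterlim a at_top at_top"
    "\<And>x x'. dY (f x) (f x') \<le> a (dX x x')"
    using assms(2) unfolding coarse_lipschitz_def by blast
  obtain C where C: "\<And>x. dY (f x) (h x) \<le> C"
    using assms(3) unfolding close_maps_def by blast
  have "C \<ge> 0" using C order_trans nonneg by blast
  have "dY (h x) (h x') \<le> 2 * C + a (dX x x')" for x x'
  proof -
    have "dY (h x) (h x') \<le> dY (h x) (f x) + dY (f x) (f x') + dY (f x') (h x')"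
      using triangle[of "h x" "f x" "h x'"] triangle[of "f x" "f x'" "h x'"] by simp
    then show ?thesis using a(4)[of x x'] C[of x] C[of x'] commute[of "h x" "f x"] by linarith
  qed
  moreover have "mono_on {0..} (\<lambda>t. 2 * C + a t)"
    using a(1) by (auto simp: mono_on_def)
  moreover have "filterlim (\<lambda>t. 2 * C + a t) at_top at_top"
    by (rule filterlim_tendsto_add_at_top[OF tendsto_const a(3)])
  ultimately show ?thesis
    unfolding coarse_lipschitz_def using a(2) \<open>C \<ge> 0\<close>
    by (intro exI[of _ "\<lambda>t. 2 * C + a t"]) auto
qed

lemma coarse_lipschitz_measurable_close:
  fixes dX :: "'a::second_countable_topology \<Rightarrow> 'a \<Rightarrow> real"
    and f :: "'a \<Rightarrow> 'b::topological_space"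
  assumes "Metric_space UNIV dX" and cont: "continuous_on UNIV (\<lambda>p. dX (fst p) (snd p))"
    and "coarse_lipschitz dX dY f"
  shows "\<exists>f'. f' \<in> borel_measurable borel \<and> close_maps dY f' f"
proof -
  interpret Metric_space UNIV dX by (rule assms(1))
  have "continuous_on UNIV (\<lambda>y. dX y x)" "continuous_on UNIV (\<lambda>y. dX x y)" for x
    using continuous_on_compose2[OF cont, of UNIV "\<lambda>y. (y, x)"]
      continuous_on_compose2[OF cont, of UNIV "\<lambda>y. (x, y)"]
      continuous_on_Pair[OF continuous_on_id continuous_on_const]
      continuous_on_Pair[OF continuous_on_const continuous_on_id]
    by auto
  then have open_ball: "open {y. dX y x < 1}" "open {y. dX x y < 1}" for x
    by (auto intro: open_Collect_less)
  obtain D :: "'a set" where D: "countable D" "\<And>U. open U \<Longrightarrow> U \<noteq> {} \<Longrightarrow> \<exists>y \<in> D. y \<in> U"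
    using countable_dense_exists by blast
  have "D \<noteq> {}" using D(2)[of UNIV] by auto
  define xs where "xs = from_nat_into D"
  have "range xs = D" unfolding xs_def using D(1) \<open>D \<noteq> {}\<close> by (simp add: range_from_nat_into)
  have "\<exists>n. dX (xs n) x < 1" for x
  proof -
    have "x \<in> {y. dX y x < 1}" by simp
    then obtain y where "y \<in> D" "dX y x < 1" using D(2)[OF open_ball(1), of x] by blast
    then show ?thesis using \<open>range xs = D\<close> by auto
  qed
  define N where "N x = (LEAST n. dX (xs n) x < 1)" for x
  have N_near: "dX (xs (N x)) x < 1" for x
    unfolding N_def using \<open>\<exists>n. dX (xs n) x < 1\<close> by (rule LeastI_ex)
  have "N \<in> measurable borel (count_space UNIV)"
    unfolding N_def using open_ball(2) by (intro measurable_Least) (auto simp: pred_def)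
  then have "(\<lambda>x. f (xs (N x))) \<in> borel_measurable borel"
    by (rule measurable_compose) simp
  moreover have "close_maps dX (xs \<circ> N) id"
    unfolding close_maps_def using N_near less_imp_le by auto
  then have "close_maps dY (f \<circ> (xs \<circ> N)) (f \<circ> id)"
    by (rule close_maps_compose_left[OF assms(1) assms(3)])
  ultimately show ?thesis by (auto simp: o_def)
qed

lemma lipc_metric_measurable_close:
  fixes d :: "'a::{topological_group_add, second_countable_topology} \<Rightarrow> 'a \<Rightarrow> real"
    and f :: "'a \<Rightarrow> 'b::topological_space"
  assumes "lipc_metric d" and "coarse_lipschitz d dY f"
  shows "\<exists>f'. f' \<in> borel_measurable borel \<and> close_maps dY f' f"
  using assms coarse_lipschitz_measurable_close unfolding lipc_metric_def by blast

theorem lemma4p1: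
  fixes dG :: "'g::{topological_group_add, t2_space, second_countable_topology} \<Rightarrow> 'g \<Rightarrow> real"
    and dH :: "'h::{topological_group_add, t2_space, second_countable_topology} \<Rightarrow> 'h \<Rightarrow> real"
  assumes "lcsc_group TYPE('g)" and "lcsc_group TYPE('h)"
    and "lipc_metric dG" and "lipc_metric dH"
    and "\<exists>f. coarse_equivalence dG dH f"
  shows "\<exists>f g. f \<in> borel_measurable borel \<and> g \<in> borel_measurable borel \<and>
    coarse_lipschitz dG dH f \<and> coarse_lipschitz dH dG g \<and>
    close_maps dH (f \<circ> g) id \<and> close_maps dG (g \<circ> f) id"
proof -
  have G: "Metric_space UNIV dG" and H: "Metric_space UNIV dH"
    using assms(3,4) unfolding lipc_metric_def by auto
  obtain f g where f: "coarse_lipschitz dG dH f" and g: "coarse_lipschitz dH dG g"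
    and fg: "close_maps dH (f \<circ> g) id" and gf: "close_maps dG (g \<circ> f) id"
    using assms(5) unfolding coarse_equivalence_def by blast
  obtain f' where f': "f' \<in> borel_measurable borel" "close_maps dH f' f"
    using lipc_metric_measurable_close[OF assms(3) f] by blast
  obtain g' where g': "g' \<in> borel_measurable borel" "close_maps dG g' g"
    using lipc_metric_measurable_close[OF assms(4) g] by blast
  have "close_maps dH (f' \<circ> g') id"
    using close_maps_compose_right[OF f'(2)] close_maps_compose_left[OF G f g'(2)] fg
    by (blast intro: close_maps_trans[OF H])
  moreover have "close_maps dG (g' \<circ> f') id"
    using close_maps_compose_right[OF g'(2)] close_maps_compose_left[OF H g f'(2)] gf
    by (blast intro: close_maps_trans[OF G])
  moreover have "coarse_lipschitz dG dH f'" "coarse_lipschitz dH dG g'"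
    using coarse_lipschitz_close[OF H f] coarse_lipschitz_close[OF G g] f'(2) g'(2)
      close_maps_sym[OF H f'(2)] close_maps_sym[OF G g'(2)] by auto
  ultimately show ?thesis using f'(1) g'(1) by blast
qed

end
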